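(* Let $(\mathcal{S},\mathcal{R})$ be an $r$-homogeneous positive presentation. Then $(\mathcal{S},\mathcal{R})$ is $r$-complete if and only if any one of the following three conditions holds, and these three conditions are equivalent: (i) the strong $r$-cube condition holds at $u,v,w$ for all $u,v,w\in\mathcal{S}^*$; (ii) the strong $r$-cube condition holds at $s,t,r$ for all letters $s,t,r\in\mathcal{S}$; (iii) the $r$-cube condition holds at $s,t,r$ for all letters $s,t,r\in\mathcal{S}$.
   Context: A positive presentation is a pair $(\mathcal{S},\mathcal{R})$ where $\mathcal{S}$ is a nonempty set of letters and $\mathcal{R}$ is a family of relations $u=v$, i.e. unordered pairs $\{u,v\}$ of nonempty words in the free monoid $\mathcal{S}^*$. $\varepsilon$ denotes the empty word; $\equiv$ is the smallest congruence on $\mathcal{S}^*$ containing all pairs of $\mathcal{R}$. Let $\mathcal{S}^{-1}=\{s^{-1}:s\in\mathcal{S}\}$ be a disjoint copy of $\mathcal{S}$; for a word $u\in\mathcal{S}^*$, $u^{-1}$ is the word on $\mathcal{S}^{-1}$ obtained by reversing the order of the letters of $u$ and replacing each $s$ by $s^{-1}$. Right reversing: for words $\mathbf{w},\mathbf{w}'$ on $\mathcal{S}\cup\mathcal{S}^{-1}$ we write $\mathbf{w}\curvearrowright_r\mathbf{w}'$ if $\mathbf{w}'$ is obtained from $\mathbf{w}$ by a finite (possibly empty) sequence of steps, each of which either deletes a subword $u^{-1}u$ with $u\in\mathcal{S}^*$ nonempty, or replaces a subword $u^{-1}v$ with $u,v\in\mathcal{S}^*$ nonempty by a word $v'u'^{-1}$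 with $u',v'\in\mathcal{S}^*$ such that $uv'=vu'$ is a relation of $\mathcal{R}$. $(\mathcal{S},\mathcal{R})$ is $r$-complete if for all $u,v,u',v'\in\mathcal{S}^*$ with $uv'\equiv vu'$ there exist $u'',v'',w\in\mathcal{S}^*$ with $u^{-1}v\curvearrowright_r v''u''^{-1}$, $u'\equiv u''w$ and $v'\equiv v''w$. For $u,v,w\in\mathcal{S}^*$: the $r$-cube condition holds at $u,v,w$ if whenever $u^{-1}ww^{-1}v\curvearrowright_r v'u'^{-1}$ with $u',v'\in\mathcal{S}^*$, there exist $u'',v'',w''\in\mathcal{S}^*$ with $u^{-1}v\curvearrowright_r v''u''^{-1}$, $u'\equiv u''w''$ and $v'\equiv v''w''$; the strong $r$-cube condition holds at $u,v,w$ if whenever $u^{-1}ww^{-1}v\curvearrowright_r v'u'^{-1}$ with $u',v'\in\mathcal{S}^*$, we have $(uv')^{-1}(vu')\curvearrowright_r\varepsilon$. $(\mathcal{S},\mathcal{R})$ is $r$-homogeneous if there is a map $\lambda$ from $\mathcal{S}^*$ to the ordinals such that $\lambda(su)>\lambda(u)$ for all $s\in\mathcal{S}$, $u\in\mathcal{S}^*$, and $\lambda(u)=\lambda(v)$ whenever $u\equiv v$. *)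

theory Defs
  imports Main
begin

text \<open>Letters of the alphabet S are the elements of a type 'a.
  Signed letters: Pos s stands for s, Neg s for s^{-1}.\<close>
datatype 'a sletter = Pos 'a | Neg 'a

text \<open>A positive presentation: relations are pairs of nonempty words,
  read as unordered pairs.\<close>
definition positive_presentation :: "('a list \<times> 'a list) set \<Rightarrow> bool" where
  "positive_presentation R \<longleftrightarrow> (\<forall>(u, v) \<in> R. u \<noteq> [] \<and> v \<noteq> [])"

definition is_rel :: "('a list \<times> 'a list) set \<Rightarrow> 'a list \<Rightarrow> 'a list \<Rightarrow> bool" where
  "is_rel R u v \<longleftrightarrow> (u, v) \<in> R \<or> (v, u) \<in> R"

inductive pcong :: "('a list \<times> 'a list) set \<Rightarrow> 'a list \<Rightarrow> 'a list \<Rightarrow> bool"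
  for R where
  base: "is_rel R u v \<Longrightarrow> pcong R (x @ u @ y) (x @ v @ y)"
| refl: "pcong R u u"
| sym: "pcong R u v \<Longrightarrow> pcong R v u"
| trans: "pcong R u v \<Longrightarrow> pcong R v w \<Longrightarrow> pcong R u w"

definition pos :: "'a list \<Rightarrow> 'a sletter list" where
  "pos u = map Pos u"

definition neg :: "'a list \<Rightarrow> 'a sletter list" where
  "neg u = map Neg (rev u)"

inductive rstep :: "('a list \<times> 'a list) set \<Rightarrow> 'a sletter list \<Rightarrow> 'a sletter list \<Rightarrow> bool"
  for R where
  cancel: "u \<noteq> [] \<Longrightarrow> rstep R (x @ neg u @ pos u @ y) (x @ y)"
| switch: "u \<noteq> [] \<Longrightarrow> v \<noteq> [] \<Longrightarrow> is_rel R (u @ v') (v @ u') \<Longrightarrow>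
     rstep R (x @ neg u @ pos v @ y) (x @ pos v' @ neg u' @ y)"

definition rrev :: "('a list \<times> 'a list) set \<Rightarrow> 'a sletter list \<Rightarrow> 'a sletter list \<Rightarrow> bool" where
  "rrev R = (rstep R)\<^sup>*\<^sup>*"

definition r_complete :: "('a list \<times> 'a list) set \<Rightarrow> bool" where
  "r_complete R \<longleftrightarrow> (\<forall>u v u' v'. pcong R (u @ v') (v @ u') \<longrightarrow>
     (\<exists>u'' v'' w. rrev R (neg u @ pos v) (pos v'' @ neg u'') \<and>
        pcong R u' (u'' @ w) \<and> pcong R v' (v'' @ w)))"

definition r_cube :: "('a list \<times> 'a list) set \<Rightarrow> 'a list \<Rightarrow> 'a list \<Rightarrow> 'a list \<Rightarrow> bool" where
  "r_cube R u v w \<longleftrightarrow> (\<forall>u' v'. rrev R (neg u @ pos w @ neg w @ pos v) (pos v' @ neg u') \<longrightarrow>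
     (\<exists>u'' v'' w''. rrev R (neg u @ pos v) (pos v'' @ neg u'') \<and>
        pcong R u' (u'' @ w'') \<and> pcong R v' (v'' @ w'')))"

definition strong_r_cube :: "('a list \<times> 'a list) set \<Rightarrow> 'a list \<Rightarrow> 'a list \<Rightarrow> 'a list \<Rightarrow> bool" where
  "strong_r_cube R u v w \<longleftrightarrow> (\<forall>u' v'. rrev R (neg u @ pos w @ neg w @ pos v) (pos v' @ neg u') \<longrightarrow>
     rrev R (neg (u @ v') @ pos (v @ u')) [])"

text \<open>A witness of r-homogeneity: a map into a well-ordered type (standing
  for the ordinals).\<close>
definition r_homogeneous_map :: "('a list \<times> 'a list) set \<Rightarrow> ('a list \<Rightarrow> 'b::wellorder) \<Rightarrow> bool" where
  "r_homogeneous_map R lam \<longleftrightarrow> (\<forall>s u. lam (s # u) > lam u) \<and>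
     (\<forall>u v. pcong R u v \<longrightarrow> lam u = lam v)"

end

(* Reversing is sound: interpreting a signed word as a relation on S^* (letters act by
   left multiplication, inverse letters by left division) and checking that each reversing
   step preserves it, u^-1 v reversing to v' u'^-1 gives u v' = v u'. Hence completeness
   makes (u v')^-1 (v u') reverse to the empty word whenever u^-1 w w^-1 v reverses to
   v' u'^-1, i.e. the strong cube condition. At letters, the first step of reversing
   (s v')^-1 (t u') must act on s^-1 t, which yields the cube condition.

   Conversely, completeness at a word z is proved by induction on lambda(z), assuming it at
   all proper right divisors of z. For two letters one follows a chain of elementary
   relation steps from s x to t y and closes each triangle s, r, t by the cube condition at
   (s, t, r); for words, the reversing diagram of (s u)^-1 (t v) is tiled by the letter case
   and three instances at proper right divisors. *)

theory Submission
  imports Defs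
begin

section \<open>Congruence and reversing\<close>

lemmas pcong_trans [trans] = pcong.trans

lemma pcong_context: "pcong R u v \<Longrightarrow> pcong R (x @ u @ y) (x @ v @ y)"
proof (induction rule: pcong.induct)
  case (base u v x' y')
  then show ?case using pcong.base[of R u v "x @ x'" "y' @ y"] by simp
qed (auto intro: pcong.intros)

lemma pcong_append: "pcong R a b \<Longrightarrow> pcong R c d \<Longrightarrow> pcong R (a @ c) (b @ d)"
  using pcong_context[of R a b "[]" c] pcong_context[of R c d b "[]"] by (auto intro: pcong.trans)

lemma pcong_append_left: "pcong R u v \<Longrightarrow> pcong R (x @ u) (x @ v)"
  by (simp add: pcong_append pcong.refl)

lemma pcong_Nil_iff:
  assumes "positive_presentation R" and "pcong R x y"
  shows "x = [] \<longleftrightarrow> y = []"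
  using assms(2)
proof (induction rule: pcong.induct)
  case (base u v x y)
  with assms(1) show ?case
    unfolding positive_presentation_def is_rel_def by auto
qed auto

definition rel_step :: "('a list \<times> 'a list) set \<Rightarrow> 'a list \<Rightarrow> 'a list \<Rightarrow> bool" where
  "rel_step R x y \<longleftrightarrow> (\<exists>p a b q. is_rel R a b \<and> x = p @ a @ q \<and> y = p @ b @ q)"

lemma pcong_iff_rtranclp_rel_step: "pcong R x y \<longleftrightarrow> (rel_step R)\<^sup>*\<^sup>* x y"
proof
  have "symp (rel_step R)"
    unfolding symp_def rel_step_def is_rel_def by blast
  then have sym: "(rel_step R)\<^sup>*\<^sup>* y x" if "(rel_step R)\<^sup>*\<^sup>* x y" for x y
    using that symp_rtranclp by (metis sympD)
  show "(rel_step R)\<^sup>*\<^sup>* x y" if "pcong R x y"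
    using that
  proof (induction rule: pcong.induct)
    case (base u v x y)
    then show ?case unfolding rel_step_def by blast
  qed (auto intro: sym)
  show "pcong R x y" if "(rel_step R)\<^sup>*\<^sup>* x y"
    using that
  proof (induction rule: rtranclp_induct)
    case (step y z)
    then show ?case unfolding rel_step_def by (auto intro: pcong.trans pcong.base)
  qed (rule pcong.refl)
qed

lemma neg_simps [simp]: "neg [] = []" "neg (s # u) = neg u @ [Neg s]" "neg (a @ b) = neg b @ neg a"
  by (auto simp: neg_def)

lemma pos_simps [simp]: "pos [] = []" "pos (s # u) = Pos s # pos u" "pos (a @ b) = pos a @ pos b"
  by (auto simp: pos_def)

text \<open>\<open>acts_to R w p q\<close> reads the signed word \<open>w\<close> as acting on \<open>p\<close> from the left,
  a letter by multiplication and an inverse letter by left division, with result \<open>q\<close>;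
  for instance \<open>acts_to R (neg u @ pos v) p q\<close> means \<open>pcong R (v @ p) (u @ q)\<close>.\<close>
fun acts_to :: "('a list \<times> 'a list) set \<Rightarrow> 'a sletter list \<Rightarrow> 'a list \<Rightarrow> 'a list \<Rightarrow> bool" where
  "acts_to R [] p q \<longleftrightarrow> pcong R p q"
| "acts_to R (Pos s # w) p q \<longleftrightarrow> (\<exists>r. acts_to R w p r \<and> pcong R q (s # r))"
| "acts_to R (Neg s # w) p q \<longleftrightarrow> acts_to R w p (s # q)"

lemma acts_to_pcong: "acts_to R w p q \<Longrightarrow> pcong R q q' \<Longrightarrow> acts_to R w p q'"
proof (induction w arbitrary: q q')
  case (Cons a w)
  show ?case
  proof (cases a)
    case (Pos s)
    with Cons show ?thesis by (meson acts_to.simps(2) pcong.sym pcong.trans)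
  next
    case (Neg s)
    with Cons show ?thesis using pcong_append_left[of R q q' "[s]"] by simp
  qed
qed (auto intro: pcong.trans)

lemma acts_to_append:
  "acts_to R (w1 @ w2) p q \<longleftrightarrow> (\<exists>r. acts_to R w2 p r \<and> acts_to R w1 r q)"
proof (induction w1 arbitrary: q)
  case Nil
  then show ?case by (auto intro: acts_to_pcong pcong.refl)
next
  case (Cons a w1)
  then show ?case by (cases a) auto
qed

lemma acts_to_pos: "acts_to R (pos v) p q \<longleftrightarrow> pcong R q (v @ p)"
proof (induction v arbitrary: q)
  case Nil
  then show ?case by (auto intro: pcong.sym)
next
  case (Cons s v)
  have "acts_to R (pos (s # v)) p q \<longleftrightarrow> (\<exists>r. pcong R r (v @ p) \<and> pcong R q (s # r))"
    using Cons.IH by simp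
  also have "\<dots> \<longleftrightarrow> pcong R q (s # v @ p)"
    using pcong_append_left[of R _ "v @ p" "[s]"] pcong.trans pcong.refl by fastforce
  finally show ?case by simp
qed

lemma acts_to_neg_append: "acts_to R (neg u @ w) p q \<longleftrightarrow> acts_to R w p (u @ q)"
  by (induction u arbitrary: w q) auto

lemma acts_to_neg: "acts_to R (neg u) p q \<longleftrightarrow> pcong R p (u @ q)"
  using acts_to_neg_append[of R u "[]"] by simp

lemma acts_to_rstep: "rstep R w w' \<Longrightarrow> acts_to R w' p q \<Longrightarrow> acts_to R w p q"
proof (induction rule: rstep.induct)
  case (cancel u x y)
  then obtain r where "acts_to R y p r" "acts_to R x r q"
    by (auto simp: acts_to_append)
  then show ?case
    by (auto simp: acts_to_append acts_to_pos acts_to_neg intro: pcong.refl)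
next
  case (switch u v v' u' x y)
  then obtain r r1 r2 where r: "acts_to R y p r" "pcong R r (u' @ r1)" "pcong R r2 (v' @ r1)"
    "acts_to R x r2 q"
    by (auto simp: acts_to_append acts_to_pos acts_to_neg)
  have "pcong R (u @ r2) (u @ v' @ r1)"
    using r(3) by (rule pcong_append_left)
  also have "pcong R (u @ v' @ r1) (v @ u' @ r1)"
    using switch.hyps(3) pcong.base[of R "u @ v'" "v @ u'" "[]" r1] by simp
  also have "pcong R (v @ u' @ r1) (v @ r)"
    using r(2) by (rule pcong_append_left[OF pcong.sym])
  finally have "pcong R (u @ r2) (v @ r)"
    by simp
  with r show ?case
    by (simp add: acts_to_append acts_to_pos acts_to_neg) (blast intro: pcong.refl)
qed

lemma acts_to_rrev: "rrev R w w' \<Longrightarrow> acts_to R w' p q \<Longrightarrow> acts_to R w p q"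
  unfolding rrev_def by (induction rule: rtranclp_induct) (auto intro: acts_to_rstep)

lemma rrev_four_factors_pcong:
  assumes "rrev R (neg u @ pos w @ neg w' @ pos v) (pos v' @ neg u')"
  obtains q where "pcong R (u @ v') (w @ q)" and "pcong R (w' @ q) (v @ u')"
proof -
  have "acts_to R (pos v' @ neg u') u' v'"
    by (simp add: acts_to_append acts_to_pos acts_to_neg) (metis append_Nil2 pcong.refl)
  then have "acts_to R (neg u @ pos w @ neg w' @ pos v) u' v'"
    using acts_to_rrev[OF assms] by blast
  then obtain a b c where "pcong R a (v @ u')" "pcong R a (w' @ b)" "pcong R c (w @ b)"
    "pcong R c (u @ v')"
    by (auto simp: acts_to_append acts_to_pos acts_to_neg)
  then show ?thesis
    using that by (meson pcong.sym pcong.trans)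
qed

lemma rrev_pcong:
  assumes "rrev R (neg u @ pos v) (pos v' @ neg u')"
  shows "pcong R (u @ v') (v @ u')"
proof -
  from assms have "rrev R (neg u @ pos [] @ neg [] @ pos v) (pos v' @ neg u')"
    by simp
  then obtain q where "pcong R (u @ v') q" "pcong R q (v @ u')"
    by (rule rrev_four_factors_pcong) simp
  then show ?thesis
    by (rule pcong.trans)
qed

lemma rstep_context: "rstep R w w' \<Longrightarrow> rstep R (x @ w @ y) (x @ w' @ y)"
proof (induction rule: rstep.induct)
  case (cancel u x' y')
  then show ?case using rstep.cancel[of u R "x @ x'" "y' @ y"] by simp
next
  case (switch u v v' u' x' y')
  then show ?case using rstep.switch[of u v R v' u' "x @ x'" "y' @ y"] by simp
qed

lemma rrev_context: "rrev R w w' \<Longrightarrow> rrev R (x @ w @ y) (x @ w' @ y)"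
  unfolding rrev_def
  by (induction rule: rtranclp_induct) (auto intro: rtranclp.rtrancl_into_rtrancl rstep_context)

lemma rrev_refl: "rrev R w w"
  by (simp add: rrev_def)

lemma rrev_trans [trans]: "rrev R w1 w2 \<Longrightarrow> rrev R w2 w3 \<Longrightarrow> rrev R w1 w3"
  by (simp add: rrev_def)

lemma rrev_append_append:
  assumes "rrev R (neg u1 @ pos v1) (pos a @ neg b)"
    and "rrev R (neg u2 @ pos a) (pos c @ neg d)"
    and "rrev R (neg b @ pos v2) (pos e @ neg f)"
    and "rrev R (neg d @ pos e) (pos g @ neg h)"
  shows "rrev R (neg (u1 @ u2) @ pos (v1 @ v2)) (pos (c @ g) @ neg (f @ h))"
proof -
  have "rrev R (neg (u1 @ u2) @ pos (v1 @ v2)) (neg u2 @ pos a @ neg b @ pos v2)"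
    using rrev_context[OF assms(1), of "neg u2" "pos v2"] by simp
  also have "rrev R \<dots> (pos c @ neg d @ neg b @ pos v2)"
    using rrev_context[OF assms(2), of "[]" "neg b @ pos v2"] by simp
  also have "rrev R \<dots> (pos c @ neg d @ pos e @ neg f)"
    using rrev_context[OF assms(3), of "pos c @ neg d" "[]"] by simp
  also have "rrev R \<dots> (pos c @ pos g @ neg h @ neg f)"
    using rrev_context[OF assms(4), of "pos c" "neg f"] by simp
  finally show ?thesis
    by simp
qed

lemma rrev_switch_letters:
  "is_rel R (s # v') (t # u') \<Longrightarrow> rrev R [Neg s, Pos t] (pos v' @ neg u')"
  using rstep.switch[of "[s]" "[t]" R v' u' "[]" "[]"] by (simp add: rrev_def)

lemma rrev_cancel_letter: "rrev R [Neg s, Pos s] []"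
  using rstep.cancel[of "[s]" R "[]" "[]"] by (simp add: rrev_def)

section \<open>Completeness from the cube condition at letters\<close>

definition rrev_factors :: "('a list \<times> 'a list) set \<Rightarrow> 'a list \<Rightarrow> 'a list \<Rightarrow> 'a list \<Rightarrow> 'a list \<Rightarrow> bool" where
  "rrev_factors R u v u' v' \<longleftrightarrow> (\<exists>u'' v'' w. rrev R (neg u @ pos v) (pos v'' @ neg u'') \<and>
     pcong R u' (u'' @ w) \<and> pcong R v' (v'' @ w))"

lemma r_cube_iff_rrev_factors:
  "r_cube R u v w \<longleftrightarrow>
     (\<forall>u' v'. rrev R (neg u @ pos w @ neg w @ pos v) (pos v' @ neg u') \<longrightarrow> rrev_factors R u v u' v')"
  by (simp add: r_cube_def rrev_factors_def)

lemma rrev_factors_Nil_left: "pcong R v' (v @ u') \<Longrightarrow> rrev_factors R [] v u' v'"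
  unfolding rrev_factors_def
  by (rule exI[of _ "[]"], rule exI[of _ v], rule exI[of _ u']) (simp add: rrev_refl pcong.refl)

lemma rrev_factors_Nil_right: "pcong R u' (u @ v') \<Longrightarrow> rrev_factors R u [] u' v'"
  unfolding rrev_factors_def
  by (rule exI[of _ u], rule exI[of _ "[]"], rule exI[of _ v']) (simp add: rrev_refl pcong.refl)

lemma rrev_factors_same_letter: "pcong R u' v' \<Longrightarrow> rrev_factors R [s] [s] u' v'"
  unfolding rrev_factors_def
  by (rule exI[of _ "[]"], rule exI[of _ "[]"], rule exI[of _ v']) (simp add: rrev_cancel_letter pcong.refl)

definition r_complete_at :: "('a list \<times> 'a list) set \<Rightarrow> 'a list \<Rightarrow> bool" where
  "r_complete_at R z \<longleftrightarrow> (\<forall>u v u' v'. pcong R (u @ v') z \<longrightarrow> pcong R (v @ u') z \<longrightarrow>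
     rrev_factors R u v u' v')"

lemma r_complete_iff_r_complete_at: "r_complete R \<longleftrightarrow> (\<forall>z. r_complete_at R z)"
  unfolding r_complete_def r_complete_at_def rrev_factors_def
  by (meson pcong.refl pcong.sym pcong.trans)

lemma rrev_factors_rel_step:
  assumes "positive_presentation R" and "rel_step R (r # z) (r' # z')"
  shows "rrev_factors R [r] [r'] z' z"
proof -
  obtain p a b q where rel: "is_rel R a b" and z: "r # z = p @ a @ q" and z': "r' # z' = p @ b @ q"
    using assms(2) unfolding rel_step_def by blast
  have "a \<noteq> []" "b \<noteq> []"
    using rel assms(1) unfolding is_rel_def positive_presentation_def by auto
  show ?thesis
  proof (cases p)
    case Nil
    with z z' \<open>a \<noteq> []\<close> \<open>b \<noteq> []\<close> obtain a' b'
      where "a = r # a'" "z = a' @ q" "b = r' # b'" "z' = b' @ q"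
      by (cases a; cases b) auto
    moreover from rel this have "rrev R [Neg r, Pos r'] (pos a' @ neg b')"
      by (auto intro: rrev_switch_letters)
    ultimately show ?thesis
      unfolding rrev_factors_def by (auto intro: pcong.refl)
  next
    case (Cons p0 p')
    with z z' have "r' = r" "z = p' @ a @ q" "z' = p' @ b @ q"
      by auto
    moreover have "pcong R (p' @ b @ q) (p' @ a @ q)"
      using rel pcong.base[of R b a] unfolding is_rel_def by blast
    ultimately show ?thesis
      by (simp add: rrev_factors_same_letter)
  qed
qed

lemma rrev_factors_letters_trans:
  assumes cube: "r_cube R [s] [t] [r]"
    and sr: "rrev_factors R [s] [r] z x"
    and rt: "rrev_factors R [r] [t] y z"
    and complete: "r_complete_at R z"
  shows "rrev_factors R [s] [t] y x"
proof -
  from sr obtain b a z1 where A: "rrev R (neg [s] @ pos [r]) (pos a @ neg b)"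
    "pcong R z (b @ z1)" "pcong R x (a @ z1)"
    unfolding rrev_factors_def by blast
  from rt obtain d c z2 where B: "rrev R (neg [r] @ pos [t]) (pos c @ neg d)"
    "pcong R y (d @ z2)" "pcong R z (c @ z2)"
    unfolding rrev_factors_def by blast
  from complete A(2) B(3) obtain f e z3 where C: "rrev R (neg b @ pos c) (pos e @ neg f)"
    "pcong R z2 (f @ z3)" "pcong R z1 (e @ z3)"
    unfolding r_complete_at_def rrev_factors_def by (meson pcong.sym)
  have "rrev R (neg [s] @ pos [r] @ neg [r] @ pos [t]) (pos a @ neg b @ neg [r] @ pos [t])"
    using rrev_context[OF A(1), of "[]" "neg [r] @ pos [t]"] by simp
  also have "rrev R \<dots> (pos a @ neg b @ pos c @ neg d)"
    using rrev_context[OF B(1), of "pos a @ neg b" "[]"] by simp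
  also have "rrev R \<dots> (pos a @ pos e @ neg f @ neg d)"
    using rrev_context[OF C(1), of "pos a" "neg d"] by simp
  finally have "rrev R (neg [s] @ pos [r] @ neg [r] @ pos [t]) (pos (a @ e) @ neg (d @ f))"
    by simp
  with cube obtain h g w where E: "rrev R (neg [s] @ pos [t]) (pos g @ neg h)"
    "pcong R (d @ f) (h @ w)" "pcong R (a @ e) (g @ w)"
    unfolding r_cube_iff_rrev_factors rrev_factors_def by blast
  have "pcong R y (h @ w @ z3)"
    using B(2) pcong_append_left[OF C(2), of d] pcong_append[OF E(2) pcong.refl[of R z3]]
    by (auto intro: pcong.trans)
  moreover have "pcong R x (g @ w @ z3)"
    using A(3) pcong_append_left[OF C(3), of a] pcong_append[OF E(3) pcong.refl[of R z3]]
    by (auto intro: pcong.trans)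
  ultimately show ?thesis
    unfolding rrev_factors_def using E(1) by blast
qed

lemma rrev_factors_letters:
  assumes pp: "positive_presentation R"
    and cube: "\<And>s t r. r_cube R [s] [t] [r]"
    and divisors: "\<And>x' y'. x' \<noteq> [] \<Longrightarrow> pcong R (x' @ y') (s # x) \<Longrightarrow> r_complete_at R y'"
    and "pcong R (s # x) (t # y)"
  shows "rrev_factors R [s] [t] y x"
proof -
  have "w \<noteq> [] \<and> rrev_factors R [s] [hd w] (tl w) x" if "(rel_step R)\<^sup>*\<^sup>* (s # x) w" for w
    using that
  proof (induction rule: rtranclp_induct)
    case base
    then show ?case by (simp add: rrev_factors_same_letter pcong.refl)
  next
    case (step w w')
    then obtain r z where w: "w = r # z" and sr: "rrev_factors R [s] [r] z x"
      by (cases w) auto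
    have "pcong R (s # x) (r # z)"
      using step.hyps(1) w pcong_iff_rtranclp_rel_step by metis
    then have complete: "r_complete_at R z"
      using divisors[of "[r]" z] by (simp add: pcong.sym)
    have "pcong R (s # x) w'"
      using step.hyps pcong_iff_rtranclp_rel_step by (metis rtranclp.rtrancl_into_rtrancl)
    then obtain t y where w': "w' = t # y"
      using pcong_Nil_iff[OF pp] by (cases w') auto
    have "rrev_factors R [r] [t] y z"
      using rrev_factors_rel_step[OF pp] step.hyps(2) w w' by simp
    then show ?case
      using rrev_factors_letters_trans[OF cube sr _ complete] w' by simp
  qed
  from this[of "t # y"] assms(4) show ?thesis
    by (simp add: pcong_iff_rtranclp_rel_step)
qed

lemma rrev_factors_cons_cons:
  assumes letter: "rrev_factors R [s] [t] (v @ u') (u @ v')"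
    and pc: "pcong R (s # u @ v') (t # v @ u')"
    and divisors: "\<And>x y. x \<noteq> [] \<Longrightarrow> pcong R (x @ y) (s # u @ v') \<Longrightarrow> r_complete_at R y"
  shows "rrev_factors R (s # u) (t # v) u' v'"
proof -
  from letter obtain b a z where A: "rrev R (neg [s] @ pos [t]) (pos a @ neg b)"
    "pcong R (v @ u') (b @ z)" "pcong R (u @ v') (a @ z)"
    unfolding rrev_factors_def by blast
  have "r_complete_at R (u @ v')"
    using divisors[of "[s]"] by (simp add: pcong.refl)
  with A(3) obtain d c z' where B: "rrev R (neg u @ pos a) (pos c @ neg d)"
    "pcong R z (d @ z')" "pcong R v' (c @ z')"
    unfolding r_complete_at_def rrev_factors_def by (meson pcong.refl pcong.sym)
  have "r_complete_at R (v @ u')"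
    using divisors[of "[t]" "v @ u'"] pc by (simp add: pcong.sym)
  with A(2) obtain f e z'' where C: "rrev R (neg b @ pos v) (pos e @ neg f)"
    "pcong R u' (f @ z'')" "pcong R z (e @ z'')"
    unfolding r_complete_at_def rrev_factors_def by (meson pcong.refl pcong.sym)
  have "pcong R ((s # a) @ z) (s # u @ v')"
    using pcong_append_left[OF A(3), of "[s]"] pcong.sym by simp
  then have "r_complete_at R z"
    using divisors by blast
  with B(2) C(3) obtain h g z3 where D: "rrev R (neg d @ pos e) (pos g @ neg h)"
    "pcong R z'' (h @ z3)" "pcong R z' (g @ z3)"
    unfolding r_complete_at_def rrev_factors_def by (meson pcong.sym)
  have "rrev R (neg ([s] @ u) @ pos ([t] @ v)) (pos (c @ g) @ neg (f @ h))"
    using A(1) B(1) C(1) D(1) by (rule rrev_append_append)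
  then have "rrev R (neg (s # u) @ pos (t # v)) (pos (c @ g) @ neg (f @ h))"
    by simp
  moreover have "pcong R u' ((f @ h) @ z3)"
    using C(2) pcong_append_left[OF D(2), of f] by (auto intro: pcong.trans)
  moreover have "pcong R v' ((c @ g) @ z3)"
    using B(3) pcong_append_left[OF D(3), of c] by (auto intro: pcong.trans)
  ultimately show ?thesis
    unfolding rrev_factors_def by blast
qed

lemma r_complete_at_if_divisors:
  assumes pp: "positive_presentation R"
    and cube: "\<And>s t r. r_cube R [s] [t] [r]"
    and divisors: "\<And>x y. x \<noteq> [] \<Longrightarrow> pcong R (x @ y) z \<Longrightarrow> r_complete_at R y"
  shows "r_complete_at R z"
  unfolding r_complete_at_def
proof (intro allI impI)
  fix u v u' v'
  assume uz: "pcong R (u @ v') z" and vz: "pcong R (v @ u') z"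
  then have uv: "pcong R (u @ v') (v @ u')"
    by (meson pcong.sym pcong.trans)
  show "rrev_factors R u v u' v'"
  proof (cases u)
    case Nil
    with uv show ?thesis by (simp add: rrev_factors_Nil_left)
  next
    case (Cons s u1)
    show ?thesis
    proof (cases v)
      case Nil
      with uv show ?thesis by (simp add: rrev_factors_Nil_right pcong.sym)
    next
      case (Cons t v1)
      have divisors': "r_complete_at R y" if "x \<noteq> []" "pcong R (x @ y) (s # u1 @ v')" for x y
        using divisors[OF that(1)] that(2) uz \<open>u = s # u1\<close> by (auto intro: pcong.trans)
      moreover have pc: "pcong R (s # u1 @ v') (t # v1 @ u')"
        using uv \<open>u = s # u1\<close> Cons by simp
      ultimately have "rrev_factors R [s] [t] (v1 @ u') (u1 @ v')"
        using rrev_factors_letters[OF pp cube] by blast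
      then show ?thesis
        unfolding \<open>u = s # u1\<close> Cons using pc divisors' by (rule rrev_factors_cons_cons)
    qed
  qed
qed

lemma r_homogeneous_map_append_less:
  assumes "r_homogeneous_map R lam" and "x \<noteq> []"
  shows "lam y < lam (x @ y)"
  using assms(2)
proof (induction x)
  case (Cons s x)
  have "lam (x @ y) < lam (s # x @ y)"
    using assms(1) unfolding r_homogeneous_map_def by blast
  with Cons show ?case by (cases "x = []") auto
qed simp

theorem r_complete_if_r_cube_letters:
  fixes lam :: "'a list \<Rightarrow> 'b::wellorder"
  assumes pp: "positive_presentation R" and hom: "r_homogeneous_map R lam"
    and cube: "\<forall>s t r. r_cube R [s] [t] [r]"
  shows "r_complete R"
proof -
  have "r_complete_at R z" for z
  proof (induction "lam z" arbitrary: z rule: less_induct)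
    case less
    have "lam y < lam z" if "x \<noteq> []" "pcong R (x @ y) z" for x y
      using r_homogeneous_map_append_less[OF hom that(1)] hom that(2)
      unfolding r_homogeneous_map_def by metis
    with less show ?case
      using r_complete_at_if_divisors[OF pp] cube by blast
  qed
  then show ?thesis
    by (simp add: r_complete_iff_r_complete_at)
qed

theorem strong_r_cube_if_r_complete:
  assumes pp: "positive_presentation R" and complete: "r_complete R"
  shows "strong_r_cube R u v w"
  unfolding strong_r_cube_def
proof (intro allI impI)
  fix u' v'
  assume "rrev R (neg u @ pos w @ neg w @ pos v) (pos v' @ neg u')"
  then obtain q where "pcong R (u @ v') (w @ q)" "pcong R (w @ q) (v @ u')"
    by (rule rrev_four_factors_pcong)
  then have "pcong R ((u @ v') @ []) ((v @ u') @ [])"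
    by (simp add: pcong.trans)
  with complete obtain u'' v'' w' where rev: "rrev R (neg (u @ v') @ pos (v @ u')) (pos v'' @ neg u'')"
    and "pcong R [] (u'' @ w')" "pcong R [] (v'' @ w')"
    unfolding r_complete_def by blast
  then have "u'' = []" "v'' = []"
    using pcong_Nil_iff[OF pp] by auto
  with rev show "rrev R (neg (u @ v') @ pos (v @ u')) []"
    by simp
qed

section \<open>The first reversing step\<close>

lemma append_neg_eq_negE:
  assumes "x @ neg u = neg A"
  obtains A' where "A = u @ A'" and "x = neg A'"
proof -
  from assms have "map Neg (rev A) = x @ map Neg (rev u)"
    by (simp add: neg_def)
  then obtain r1 r2 where "rev A = r1 @ r2" "x = map Neg r1" "map Neg r2 = map Neg (rev u)"
    by (auto simp: map_eq_append_conv)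
  moreover from this(3) have "r2 = rev u"
    by (simp add: inj_map_eq_map inj_def)
  ultimately show ?thesis
    using that[of "rev r1"] by (simp add: neg_def rev_swap)
qed

lemma pos_append_eq_posE:
  assumes "pos v @ y = pos B"
  obtains B' where "B = v @ B'" and "y = pos B'"
proof -
  from assms have "map Pos B = map Pos v @ y"
    by (simp add: pos_def)
  then obtain b1 b2 where "B = b1 @ b2" "map Pos b1 = map Pos v" "y = map Pos b2"
    by (auto simp: map_eq_append_conv)
  moreover from this(2) have "b1 = v"
    by (simp add: inj_map_eq_map inj_def)
  ultimately show ?thesis
    using that[of b2] by (simp add: pos_def)
qed

text \<open>In a word of the form \<open>neg A @ pos B\<close> the only negative letter followed by a
  positive one sits at the junction, so every reversing step applies there.\<close>
lemma append_neg_pos_eq_neg_posE: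
  assumes eq: "x @ neg u @ pos v @ y = neg A @ pos B" and "u \<noteq> []" and "v \<noteq> []"
  obtains A' B' where "A = u @ A'" "B = v @ B'" "x = neg A'" "y = pos B'"
proof -
  obtain a u1 where u: "u = a # u1"
    using \<open>u \<noteq> []\<close> by (cases u) auto
  obtain b v1 where v: "v = b # v1"
    using \<open>v \<noteq> []\<close> by (cases v) auto
  from eq u v have "(x @ neg u1 @ [Neg a]) @ (Pos b # pos v1 @ y) = neg A @ pos B"
    by simp
  then obtain us where
    "x @ neg u1 @ [Neg a] = neg A @ us \<and> us @ Pos b # pos v1 @ y = pos B \<or>
     (x @ neg u1 @ [Neg a]) @ us = neg A \<and> Pos b # pos v1 @ y = us @ pos B"
    unfolding append_eq_append_conv2 by blast
  moreover have "Neg a \<notin> set (pos B)" "Pos b \<notin> set (neg A)"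
    by (auto simp: pos_def neg_def)
  ultimately have "x @ neg u = neg A \<and> pos v @ y = pos B"
  proof (elim disjE conjE)
    assume l: "x @ neg u1 @ [Neg a] = neg A @ us" and r: "us @ Pos b # pos v1 @ y = pos B"
    have "us = []"
    proof (rule ccontr)
      assume "us \<noteq> []"
      then have "last us = Neg a"
        using arg_cong[OF l, of last] by simp
      with \<open>us \<noteq> []\<close> r have "Neg a \<in> set (pos B)"
        by (metis Un_iff last_in_set set_append)
      with \<open>Neg a \<notin> set (pos B)\<close> show False ..
    qed
    with l r u v show ?thesis by simp
  next
    assume l: "(x @ neg u1 @ [Neg a]) @ us = neg A" and r: "Pos b # pos v1 @ y = us @ pos B"
    have "us = []"
    proof (rule ccontr)
      assume "us \<noteq> []"
      then have "hd us = Pos b"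
        using arg_cong[OF r, of hd] by simp
      with \<open>us \<noteq> []\<close> l have "Pos b \<in> set (neg A)"
        by (metis Un_iff hd_in_set set_append)
      with \<open>Pos b \<notin> set (neg A)\<close> show False ..
    qed
    with l r u v show ?thesis by simp
  qed
  then show ?thesis
    using that by (metis append_neg_eq_negE pos_append_eq_posE)
qed

theorem r_cube_if_strong_r_cube_letters:
  assumes strong: "strong_r_cube R [s] [t] w"
  shows "r_cube R [s] [t] w"
  unfolding r_cube_iff_rrev_factors
proof (intro allI impI)
  fix u' v'
  assume "rrev R (neg [s] @ pos w @ neg w @ pos [t]) (pos v' @ neg u')"
  with strong have "rrev R (neg (s # v') @ pos (t # u')) []"
    unfolding strong_r_cube_def by (simp only: append_Cons append_Nil)
  then obtain W where first: "rstep R (neg (s # v') @ pos (t # u')) W" and rest: "rrev R W []"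
    unfolding rrev_def by (cases rule: converse_rtranclpE) auto
  from first show "rrev_factors R [s] [t] u' v'"
  proof (cases rule: rstep.cases)
    case (cancel u x y)
    then obtain A' B' where "s # v' = u @ A'" "t # u' = u @ B'" "x = neg A'" "y = pos B'"
      by (metis append_neg_pos_eq_neg_posE)
    moreover from this(1) \<open>u \<noteq> []\<close> obtain u1 where "u = s # u1"
      by (cases u) auto
    moreover have "pcong R A' B'"
      using rrev_pcong[of R A' B' "[]" "[]"] rest cancel calculation by simp
    ultimately show ?thesis
      by (auto intro: rrev_factors_same_letter pcong_append_left pcong.sym)
  next
    case (switch u v v1 u1 x y)
    then obtain A' B' where AB: "s # v' = u @ A'" "t # u' = v @ B'" "x = neg A'" "y = pos B'"
      by (metis append_neg_pos_eq_neg_posE)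
    obtain x2 where u: "u = s # x2"
      using AB(1) \<open>u \<noteq> []\<close> by (cases u) auto
    obtain y2 where v: "v = t # y2"
      using AB(2) \<open>v \<noteq> []\<close> by (cases v) auto
    have "rrev R (neg A' @ pos v1 @ neg u1 @ pos B') (pos [] @ neg [])"
      using rest switch AB by simp
    then obtain q where q: "pcong R A' (v1 @ q)" "pcong R (u1 @ q) B'"
      by (rule rrev_four_factors_pcong) simp
    have "rrev R (neg [s] @ pos [t]) (pos (x2 @ v1) @ neg (y2 @ u1))"
      using switch u v rrev_switch_letters[of R s "x2 @ v1" t "y2 @ u1"] by simp
    moreover have "pcong R u' ((y2 @ u1) @ q)"
      using AB(2) v pcong_append_left[OF pcong.sym[OF q(2)], of y2] by simp
    moreover have "pcong R v' ((x2 @ v1) @ q)"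
      using AB(1) u pcong_append_left[OF q(1), of x2] by simp
    ultimately show ?thesis
      unfolding rrev_factors_def by blast
  qed
qed

theorem proposition4p4:
  fixes R :: "('a list \<times> 'a list) set"
    and lam :: "'a list \<Rightarrow> 'b::wellorder"
  assumes "positive_presentation R"
    and "r_homogeneous_map R lam"
  shows "(r_complete R \<longleftrightarrow> (\<forall>u v w. strong_r_cube R u v w))
    \<and> ((\<forall>u v w. strong_r_cube R u v w) \<longleftrightarrow> (\<forall>s t r. strong_r_cube R [s] [t] [r]))
    \<and> ((\<forall>s t r. strong_r_cube R [s] [t] [r]) \<longleftrightarrow> (\<forall>s t r. r_cube R [s] [t] [r]))"
proof -
  have "r_complete R \<Longrightarrow> strong_r_cube R u v w" for u v w
    using strong_r_cube_if_r_complete[OF assms(1)] .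
  moreover have "strong_r_cube R [s] [t] [r] \<Longrightarrow> r_cube R [s] [t] [r]" for s t r
    by (rule r_cube_if_strong_r_cube_letters)
  moreover have "(\<forall>s t r. r_cube R [s] [t] [r]) \<Longrightarrow> r_complete R"
    using r_complete_if_r_cube_letters[OF assms] .
  ultimately show ?thesis
    by blast
qed

end
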